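(* Let $R=\prod_{i=1}^m R_i$ be a finite commutative ring which is the direct product of the rings $R_1,\dots,R_m$, let $K\le R^\times$, and let $\mathcal C=\mathrm{Cyc}(K,R)$. For each $i$ let $\varphi_i:R_i^\times\to R^\times$ be the monomorphism such that the $j$th component of $\varphi_i(x)$ is $x$ for $j=i$ and $1_{R_j}$ for $j\ne i$; let $K_i\le R_i^\times$ be defined by $\varphi_i(K_i)=K\cap\varphi_i(R_i^\times)$, and let $\mathcal C_i=\mathrm{Cyc}(K_i,R_i)$. Put $u=0_R$, $v=1_R$, $u_i=0_{R_i}$, $v_i=1_{R_i}$. Then $$\mathrm{Aut}(\mathcal C)_{u,v}=\prod_{i=1}^m \mathrm{Aut}(\mathcal C_i)_{u_i,v_i},$$ where the right-hand side acts on $R=\prod_i R_i$ componentwise. In particular, $\mathcal C$ is normal if and only if $\mathcal C_i$ is normal for every $i$.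
   Context: All rings have an identity. For a finite commutative ring $R$ and a subgroup $K$ of its multiplicative group $R^\times$, the cyclotomic scheme $\mathrm{Cyc}(K,R)$ is the pair $(R,\mathrm{Rel}(K,R))$, where $\mathrm{Rel}(K,R)$ is the set of binary relations $\{(x,y)\in R\times R:\ y-x\in rK\}$, $r\in R$ (these partition $R\times R$). Its automorphism group $\mathrm{Aut}(\mathcal C)$ is the group of all permutations $f$ of $R$ with $S^f=S$ for every $S\in\mathrm{Rel}(K,R)$. For points $a,b$, $\mathrm{Aut}(\mathcal C)_{a,b}$ is the pointwise stabilizer of $a$ and $b$. $\mathrm{A\Gamma L}_1(R)$ is the group of permutations of $R$ of the form $x\mapsto ax^\sigma+b$ with $a\in R^\times$, $b\in R$, $\sigma\in\mathrm{Aut}(R)$ (ring automorphisms). The scheme $\mathcal C$ is called normal if $\mathrm{Aut}(\mathcal C)\le\mathrm{A\Gamma L}_1(R)$. *)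

theory Defs
  imports "HOL-Algebra.Algebra" "HOL-Library.FuncSet"
begin

definition cyc_rel :: "('a, 'b) ring_scheme \<Rightarrow> 'a set \<Rightarrow> 'a \<Rightarrow> ('a \<times> 'a) set" where
  "cyc_rel R K r = {(x, y). x \<in> carrier R \<and> y \<in> carrier R \<and>
                     y \<ominus>\<^bsub>R\<^esub> x \<in> (\<lambda>k. r \<otimes>\<^bsub>R\<^esub> k) ` K}"

definition cyc_rels :: "'a set \<Rightarrow> ('a, 'b) ring_scheme \<Rightarrow> ('a \<times> 'a) set set" where
  "cyc_rels K R = cyc_rel R K ` carrier R"

definition cyc_aut :: "'a set \<Rightarrow> ('a, 'b) ring_scheme \<Rightarrow> ('a \<Rightarrow> 'a) set" where
  "cyc_aut K R = {f. f \<in> carrier R \<rightarrow>\<^sub>E carrier R \<and> bij_betw f (carrier R) (carrier R) \<and>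
                      (\<forall>S \<in> cyc_rels K R. (\<lambda>(x, y). (f x, f y)) ` S = S)}"

definition cyc_aut_stab :: "'a set \<Rightarrow> ('a, 'b) ring_scheme \<Rightarrow> 'a \<Rightarrow> 'a \<Rightarrow> ('a \<Rightarrow> 'a) set" where
  "cyc_aut_stab K R a b = {f \<in> cyc_aut K R. f a = a \<and> f b = b}"

definition AGammaL1 :: "('a, 'b) ring_scheme \<Rightarrow> ('a \<Rightarrow> 'a) set" where
  "AGammaL1 R = {f. f \<in> carrier R \<rightarrow>\<^sub>E carrier R \<and>
      (\<exists>a \<in> Units R. \<exists>b \<in> carrier R. \<exists>\<sigma> \<in> ring_iso R R.
          \<forall>x \<in> carrier R. f x = a \<otimes>\<^bsub>R\<^esub> \<sigma> x \<oplus>\<^bsub>R\<^esub> b)}"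

definition cyc_normal :: "'a set \<Rightarrow> ('a, 'b) ring_scheme \<Rightarrow> bool" where
  "cyc_normal K R \<longleftrightarrow> cyc_aut K R \<subseteq> AGammaL1 R"

definition prod_ring :: "nat \<Rightarrow> (nat \<Rightarrow> ('a, 'b) ring_scheme) \<Rightarrow> (nat \<Rightarrow> 'a) ring" where
  "prod_ring m Rs =
     \<lparr> carrier = (\<Pi>\<^sub>E i\<in>{..<m}. carrier (Rs i)),
       Group.monoid.mult = (\<lambda>x y. \<lambda>i\<in>{..<m}. x i \<otimes>\<^bsub>Rs i\<^esub> y i),
       one = (\<lambda>i\<in>{..<m}. \<one>\<^bsub>Rs i\<^esub>),
       Ring.ring.zero = (\<lambda>i\<in>{..<m}. \<zero>\<^bsub>Rs i\<^esub>),
       Ring.ring.add = (\<lambda>x y. \<lambda>i\<in>{..<m}. x i \<oplus>\<^bsub>Rs i\<^esub> y i) \<rparr>"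

definition prod_embed :: "nat \<Rightarrow> (nat \<Rightarrow> ('a, 'b) ring_scheme) \<Rightarrow> nat \<Rightarrow> 'a \<Rightarrow> (nat \<Rightarrow> 'a)" where
  "prod_embed m Rs i x = (\<lambda>j\<in>{..<m}. if j = i then x else \<one>\<^bsub>Rs j\<^esub>)"

definition comp_subgroup :: "nat \<Rightarrow> (nat \<Rightarrow> ('a, 'b) ring_scheme) \<Rightarrow> (nat \<Rightarrow> 'a) set \<Rightarrow> nat \<Rightarrow> 'a set" where
  "comp_subgroup m Rs K i = {x \<in> Units (Rs i). prod_embed m Rs i x \<in> K}"

definition prod_map :: "nat \<Rightarrow> (nat \<Rightarrow> ('a, 'b) ring_scheme) \<Rightarrow> (nat \<Rightarrow> 'a \<Rightarrow> 'a) \<Rightarrow> (nat \<Rightarrow> 'a) \<Rightarrow> (nat \<Rightarrow> 'a)" where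
  "prod_map m Rs fs = (\<lambda>x\<in>carrier (prod_ring m Rs). \<lambda>i\<in>{..<m}. fs i (x i))"

end

(*
  An automorphism of Cyc(K,R) is the same as an injection f of R with f y - f x in (y - x) K for
  all x, y; finiteness turns such an injection into a bijection of every basis relation.  Over a
  product R = R_1 x ... x R_m, points x, y with equal i-th coordinates have f x and f y with equal
  i-th coordinates, so f acts coordinatewise.  If f also fixes 0 and 1, comparing
  (0,...,a,...,0) with (1,...,b,...,1) shows that the multiplier in K is 1 outside coordinate i,
  i.e. lies in phi_i(K_i); conversely the multipliers of coordinatewise maps are products of
  elements phi_i(K_i), which lie in K.  For normality, every automorphism is x |-> k h(x) + c with
  k in K and h in Aut_{0,1}, and an element of Aut_{0,1} lies in AGammaL_1 iff it is a ring
  homomorphism, which for a coordinatewise map means that every coordinate map is one.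
*)

theory Submission
  imports Defs
begin

section \<open>Automorphisms of a cyclotomic scheme\<close>

lemma units_of_subgroupD:
  assumes "monoid R" and "subgroup K (units_of R)"
  shows "K \<subseteq> Units R" and "\<one>\<^bsub>R\<^esub> \<in> K" and "\<And>a b. a \<in> K \<Longrightarrow> b \<in> K \<Longrightarrow> a \<otimes>\<^bsub>R\<^esub> b \<in> K"
    and "\<And>a. a \<in> K \<Longrightarrow> inv\<^bsub>R\<^esub> a \<in> K"
proof -
  show units: "K \<subseteq> Units R"
    using subgroup.subset[OF assms(2)] by (simp add: units_of_carrier)
  show "\<one>\<^bsub>R\<^esub> \<in> K"
    using subgroup.one_closed[OF assms(2)] by (simp add: units_of_one)
  show "\<And>a b. a \<in> K \<Longrightarrow> b \<in> K \<Longrightarrow> a \<otimes>\<^bsub>R\<^esub> b \<in> K"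
    using subgroup.m_closed[OF assms(2)] by (simp add: units_of_mult)
  show "\<And>a. a \<in> K \<Longrightarrow> inv\<^bsub>R\<^esub> a \<in> K"
    using subgroup.m_inv_closed[OF assms(2)] monoid.units_of_inv[OF assms(1)] units by force
qed

definition cyc_rel_preserving :: "'a set \<Rightarrow> ('a, 'b) ring_scheme \<Rightarrow> ('a \<Rightarrow> 'a) \<Rightarrow> bool" where
  "cyc_rel_preserving K R f \<longleftrightarrow>
     (\<forall>x \<in> carrier R. \<forall>y \<in> carrier R. \<exists>k \<in> K. f y \<ominus>\<^bsub>R\<^esub> f x = (y \<ominus>\<^bsub>R\<^esub> x) \<otimes>\<^bsub>R\<^esub> k)"

context ring
begin

lemma cyc_aut_rel_preserving:
  assumes K: "subgroup K (units_of R)" and f: "f \<in> cyc_aut K R"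
  shows "cyc_rel_preserving K R f"
  unfolding cyc_rel_preserving_def
proof (intro ballI)
  fix x y assume x: "x \<in> carrier R" and y: "y \<in> carrier R"
  have r: "y \<ominus> x \<in> carrier R" using x y by simp
  then have S: "(\<lambda>(x, y). (f x, f y)) ` cyc_rel R K (y \<ominus> x) = cyc_rel R K (y \<ominus> x)"
    using f by (auto simp: cyc_aut_def cyc_rels_def)
  have "(x, y) \<in> cyc_rel R K (y \<ominus> x)"
    using x y r units_of_subgroupD(2)[OF is_monoid K]
    by (auto simp: cyc_rel_def image_iff intro!: bexI[of _ \<one>])
  then have "(f x, f y) \<in> cyc_rel R K (y \<ominus> x)"
    using S by (metis (no_types, lifting) case_prod_conv image_eqI)
  then show "\<exists>k \<in> K. f y \<ominus> f x = (y \<ominus> x) \<otimes> k" by (auto simp: cyc_rel_def)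
qed

lemma cyc_rel_preserving_image_cyc_rel:
  assumes fin: "finite (carrier R)" and K: "subgroup K (units_of R)"
    and f: "f ` carrier R \<subseteq> carrier R" "inj_on f (carrier R)" "cyc_rel_preserving K R f"
    and r: "r \<in> carrier R"
  shows "(\<lambda>(x, y). (f x, f y)) ` cyc_rel R K r = cyc_rel R K r"
proof (rule endo_inj_surj)
  have sub: "cyc_rel R K r \<subseteq> carrier R \<times> carrier R" by (auto simp: cyc_rel_def)
  then show "finite (cyc_rel R K r)" using fin finite_subset by blast
  show "inj_on (\<lambda>(x, y). (f x, f y)) (cyc_rel R K r)"
    using f(2) sub by (auto simp: inj_on_def)
  show "(\<lambda>(x, y). (f x, f y)) ` cyc_rel R K r \<subseteq> cyc_rel R K r"
  proof clarify
    fix x y assume "(x, y) \<in> cyc_rel R K r"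
    then obtain k where x: "x \<in> carrier R" and y: "y \<in> carrier R" and k: "k \<in> K"
      and e: "y \<ominus> x = r \<otimes> k" by (auto simp: cyc_rel_def)
    obtain k' where k': "k' \<in> K" and e': "f y \<ominus> f x = (y \<ominus> x) \<otimes> k'"
      using f(3) x y by (auto simp: cyc_rel_preserving_def)
    have "k \<in> carrier R" "k' \<in> carrier R"
      using k k' units_of_subgroupD(1)[OF is_monoid K] by auto
    then have "f y \<ominus> f x = r \<otimes> (k \<otimes> k')" using e e' r by (simp add: m_assoc)
    moreover have "k \<otimes> k' \<in> K" using units_of_subgroupD(3)[OF is_monoid K k k'] .
    ultimately show "(f x, f y) \<in> cyc_rel R K r" using f(1) x y by (auto simp: cyc_rel_def)
  qed
qed

lemma cyc_aut_iff_rel_preserving: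
  assumes fin: "finite (carrier R)" and K: "subgroup K (units_of R)"
  shows "f \<in> cyc_aut K R \<longleftrightarrow>
           f \<in> carrier R \<rightarrow>\<^sub>E carrier R \<and> inj_on f (carrier R) \<and> cyc_rel_preserving K R f"
proof
  assume "f \<in> cyc_aut K R"
  then show "f \<in> carrier R \<rightarrow>\<^sub>E carrier R \<and> inj_on f (carrier R) \<and> cyc_rel_preserving K R f"
    using cyc_aut_rel_preserving[OF K] by (auto simp: cyc_aut_def bij_betw_def)
next
  assume f: "f \<in> carrier R \<rightarrow>\<^sub>E carrier R \<and> inj_on f (carrier R) \<and> cyc_rel_preserving K R f"
  then have "f ` carrier R \<subseteq> carrier R" by auto
  then have "bij_betw f (carrier R) (carrier R)"
    using f endo_inj_surj[OF fin] by (simp add: bij_betw_def)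
  then show "f \<in> cyc_aut K R"
    using f cyc_rel_preserving_image_cyc_rel[OF fin K] \<open>f ` carrier R \<subseteq> carrier R\<close>
    by (auto simp: cyc_aut_def cyc_rels_def)
qed

lemma restrict_id_cyc_aut_stab: "(\<lambda>x \<in> carrier R. x) \<in> cyc_aut_stab K R \<zero> \<one>"
proof -
  have "(\<lambda>(x, y). ((\<lambda>x \<in> carrier R. x) x, (\<lambda>x \<in> carrier R. x) y)) ` S = S"
    if "S \<subseteq> carrier R \<times> carrier R" for S
    using that by (force simp: image_iff)
  moreover have "S \<subseteq> carrier R \<times> carrier R" if "S \<in> cyc_rels K R" for S
    using that by (auto simp: cyc_rels_def cyc_rel_def)
  ultimately show ?thesis
    by (auto simp: cyc_aut_stab_def cyc_aut_def bij_betw_def inj_on_def)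
qed

lemma cyc_aut_stab_AGammaL1_iff_ring_hom:
  assumes f: "f \<in> cyc_aut_stab K R \<zero> \<one>"
  shows "f \<in> AGammaL1 R \<longleftrightarrow> f \<in> ring_hom R R"
proof
  assume "f \<in> AGammaL1 R"
  then obtain a b \<sigma> where a: "a \<in> Units R" and b: "b \<in> carrier R" and \<sigma>: "\<sigma> \<in> ring_iso R R"
    and f_eq: "\<And>x. x \<in> carrier R \<Longrightarrow> f x = a \<otimes> \<sigma> x \<oplus> b" by (auto simp: AGammaL1_def)
  have h: "\<sigma> \<in> ring_hom R R" using \<sigma> by (simp add: ring_iso_def)
  have "a \<in> carrier R" using a by blast
  have "b = \<zero>"
    using f_eq[of \<zero>] f ring_hom_zero[OF h ring_axioms ring_axioms] \<open>a \<in> carrier R\<close> b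
    by (simp add: cyc_aut_stab_def)
  moreover have "a = \<one>"
    using f_eq[of \<one>] f ring_hom_one[OF h] \<open>a \<in> carrier R\<close> \<open>b = \<zero>\<close>
    by (simp add: cyc_aut_stab_def)
  ultimately have "\<And>x. x \<in> carrier R \<Longrightarrow> \<sigma> x = f x"
    using f_eq ring_hom_closed[OF h] by simp
  then show "f \<in> ring_hom R R" using ring_hom_restrict[OF h] by blast
next
  assume "f \<in> ring_hom R R"
  moreover have "bij_betw f (carrier R) (carrier R)" and "f \<in> carrier R \<rightarrow>\<^sub>E carrier R"
    using f by (auto simp: cyc_aut_stab_def cyc_aut_def)
  ultimately show "f \<in> AGammaL1 R"
    unfolding AGammaL1_def ring_iso_def using Units_one_closed zero_closed by force
qed

end

context cring
begin

lemma cyc_aut_decompose: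
  assumes fin: "finite (carrier R)" and K: "subgroup K (units_of R)" and f: "f \<in> cyc_aut K R"
  obtains k c h where "k \<in> K" and "c \<in> carrier R" and "h \<in> cyc_aut_stab K R \<zero> \<one>"
    and "\<And>x. x \<in> carrier R \<Longrightarrow> f x = k \<otimes> h x \<oplus> c"
proof -
  note cyc_aut = cyc_aut_iff_rel_preserving[OF fin K]
  have fE: "f \<in> carrier R \<rightarrow>\<^sub>E carrier R" and f_inj: "inj_on f (carrier R)"
    and f_pres: "cyc_rel_preserving K R f"
    using f cyc_aut by auto
  have fc: "\<And>x. x \<in> carrier R \<Longrightarrow> f x \<in> carrier R" using fE by auto
  define c where "c = f \<zero>"
  have c: "c \<in> carrier R" using fc by (simp add: c_def)
  obtain k where k: "k \<in> K" and k_diff: "f \<one> \<ominus> f \<zero> = (\<one> \<ominus> \<zero>) \<otimes> k"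
    using f_pres by (auto simp: cyc_rel_preserving_def)
  have kU: "k \<in> Units R" using k units_of_subgroupD(1)[OF is_monoid K] by blast
  have ik: "inv k \<in> K" using units_of_subgroupD(4)[OF is_monoid K k] .
  have kc: "k \<in> carrier R" "inv k \<in> carrier R" using kU by auto
  have k_eq: "k = f \<one> \<ominus> c" using k_diff kc by (simp add: c_def minus_eq)
  define h where "h = (\<lambda>x \<in> carrier R. inv k \<otimes> (f x \<ominus> c))"
  have hE: "h \<in> carrier R \<rightarrow>\<^sub>E carrier R" using fc c kc by (simp add: h_def)
  have h_inj: "inj_on h (carrier R)"
  proof (rule inj_onI)
    fix x y assume x: "x \<in> carrier R" and y: "y \<in> carrier R" and "h x = h y"
    then have "f x \<ominus> c = f y \<ominus> c" using kU fc c by (simp add: h_def)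
    then have "f x = f y" using fc[OF x] fc[OF y] c by (simp add: minus_eq)
    then show "x = y" using f_inj x y by (auto dest: inj_onD)
  qed
  have h_pres: "cyc_rel_preserving K R h"
    unfolding cyc_rel_preserving_def
  proof (intro ballI)
    fix x y assume x: "x \<in> carrier R" and y: "y \<in> carrier R"
    obtain k' where k': "k' \<in> K" and e: "f y \<ominus> f x = (y \<ominus> x) \<otimes> k'"
      using f_pres x y by (auto simp: cyc_rel_preserving_def)
    have "k' \<in> carrier R" using k' units_of_subgroupD(1)[OF is_monoid K] by blast
    have "h y \<ominus> h x = inv k \<otimes> (f y \<ominus> f x)"
      using x y fc[OF x] fc[OF y] c kc by (simp add: h_def) algebra
    also have "\<dots> = inv k \<otimes> ((y \<ominus> x) \<otimes> k')" using e by simp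
    also have "\<dots> = (y \<ominus> x) \<otimes> (inv k \<otimes> k')"
      using x y kc \<open>k' \<in> carrier R\<close> by algebra
    finally show "\<exists>k \<in> K. h y \<ominus> h x = (y \<ominus> x) \<otimes> k"
      using units_of_subgroupD(3)[OF is_monoid K ik k'] by blast
  qed
  have "h \<zero> = \<zero>" using c kc by (simp add: h_def c_def[symmetric] minus_eq r_neg)
  moreover have "h \<one> = \<one>" using kU k_eq by (simp add: h_def)
  ultimately have "h \<in> cyc_aut_stab K R \<zero> \<one>"
    using cyc_aut hE h_inj h_pres by (simp add: cyc_aut_stab_def)
  moreover have "f x = k \<otimes> h x \<oplus> c" if x: "x \<in> carrier R" for x
  proof -
    have "k \<otimes> h x \<oplus> c = (k \<otimes> inv k) \<otimes> (f x \<ominus> c) \<oplus> c"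
      using x kc fc[OF x] c by (simp add: h_def m_assoc)
    also have "\<dots> = f x" using kU fc[OF x] c by simp algebra
    finally show ?thesis by simp
  qed
  ultimately show ?thesis using that k c by blast
qed

lemma cyc_normal_iff_stab_ring_hom:
  assumes fin: "finite (carrier R)" and K: "subgroup K (units_of R)"
  shows "cyc_normal K R \<longleftrightarrow> (\<forall>f \<in> cyc_aut_stab K R \<zero> \<one>. f \<in> ring_hom R R)"
proof
  assume "cyc_normal K R"
  then show "\<forall>f \<in> cyc_aut_stab K R \<zero> \<one>. f \<in> ring_hom R R"
    using cyc_aut_stab_AGammaL1_iff_ring_hom by (auto simp: cyc_normal_def cyc_aut_stab_def)
next
  assume stab_hom: "\<forall>f \<in> cyc_aut_stab K R \<zero> \<one>. f \<in> ring_hom R R"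
  show "cyc_normal K R" unfolding cyc_normal_def
  proof
    fix f assume f: "f \<in> cyc_aut K R"
    then obtain k c h where k: "k \<in> K" and c: "c \<in> carrier R" and h: "h \<in> cyc_aut_stab K R \<zero> \<one>"
      and f_eq: "\<And>x. x \<in> carrier R \<Longrightarrow> f x = k \<otimes> h x \<oplus> c"
      using cyc_aut_decompose[OF fin K] by blast
    have "h \<in> ring_iso R R"
      using h stab_hom by (auto simp: ring_iso_def cyc_aut_stab_def cyc_aut_def)
    moreover have "k \<in> Units R" using k units_of_subgroupD(1)[OF is_monoid K] by blast
    ultimately show "f \<in> AGammaL1 R"
      using f f_eq c by (auto simp: AGammaL1_def cyc_aut_def)
  qed
qed

end

section \<open>Finite direct products of rings\<close>

lemma prod_ring_carrier: "carrier (prod_ring m Rs) = (\<Pi>\<^sub>E i\<in>{..<m}. carrier (Rs i))"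
  and prod_ring_mult: "x \<otimes>\<^bsub>prod_ring m Rs\<^esub> y = (\<lambda>i\<in>{..<m}. x i \<otimes>\<^bsub>Rs i\<^esub> y i)"
  and prod_ring_add: "x \<oplus>\<^bsub>prod_ring m Rs\<^esub> y = (\<lambda>i\<in>{..<m}. x i \<oplus>\<^bsub>Rs i\<^esub> y i)"
  and prod_ring_one: "\<one>\<^bsub>prod_ring m Rs\<^esub> = (\<lambda>i\<in>{..<m}. \<one>\<^bsub>Rs i\<^esub>)"
  and prod_ring_zero: "\<zero>\<^bsub>prod_ring m Rs\<^esub> = (\<lambda>i\<in>{..<m}. \<zero>\<^bsub>Rs i\<^esub>)"
  by (simp_all add: prod_ring_def)

lemmas prod_ring_simps = prod_ring_carrier prod_ring_mult prod_ring_add prod_ring_one prod_ring_zero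

lemma prod_ring_carrier_component: "x \<in> carrier (prod_ring m Rs) \<Longrightarrow> i < m \<Longrightarrow> x i \<in> carrier (Rs i)"
  by (auto simp: prod_ring_carrier)

lemma finite_carrier_prod_ring:
  "(\<And>i. i < m \<Longrightarrow> finite (carrier (Rs i))) \<Longrightarrow> finite (carrier (prod_ring m Rs))"
  unfolding prod_ring_carrier by (rule finite_PiE) auto

lemma prod_map_apply:
  "x \<in> carrier (prod_ring m Rs) \<Longrightarrow> prod_map m Rs fs x = (\<lambda>i\<in>{..<m}. fs i (x i))"
  by (simp add: prod_map_def)

lemma prod_map_apply_component:
  "x \<in> carrier (prod_ring m Rs) \<Longrightarrow> i < m \<Longrightarrow> prod_map m Rs fs x i = fs i (x i)"
  by (simp add: prod_map_def)

definition prod_single :: "nat \<Rightarrow> (nat \<Rightarrow> ('a, 'b) ring_scheme) \<Rightarrow> nat \<Rightarrow> 'a \<Rightarrow> (nat \<Rightarrow> 'a)" where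
  "prod_single m Rs i a = (\<lambda>j\<in>{..<m}. if j = i then a else \<zero>\<^bsub>Rs j\<^esub>)"

definition prod_component ::
    "nat \<Rightarrow> (nat \<Rightarrow> ('a, 'b) ring_scheme) \<Rightarrow> ((nat \<Rightarrow> 'a) \<Rightarrow> (nat \<Rightarrow> 'a)) \<Rightarrow> nat \<Rightarrow> 'a \<Rightarrow> 'a" where
  "prod_component m Rs f i = (\<lambda>a\<in>carrier (Rs i). f (prod_single m Rs i a) i)"

locale ring_family =
  fixes m :: nat and Rs :: "nat \<Rightarrow> ('a, 'b) ring_scheme"
  assumes ring_Rs: "i < m \<Longrightarrow> ring (Rs i)"
begin

abbreviation R :: "(nat \<Rightarrow> 'a) ring" where "R \<equiv> prod_ring m Rs"

lemma Rs_zero_closed [simp]: "i < m \<Longrightarrow> \<zero>\<^bsub>Rs i\<^esub> \<in> carrier (Rs i)"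
  and Rs_one_closed [simp]: "i < m \<Longrightarrow> \<one>\<^bsub>Rs i\<^esub> \<in> carrier (Rs i)"
  and Rs_l_one [simp]: "i < m \<Longrightarrow> x \<in> carrier (Rs i) \<Longrightarrow> \<one>\<^bsub>Rs i\<^esub> \<otimes>\<^bsub>Rs i\<^esub> x = x"
  and Rs_r_one [simp]: "i < m \<Longrightarrow> x \<in> carrier (Rs i) \<Longrightarrow> x \<otimes>\<^bsub>Rs i\<^esub> \<one>\<^bsub>Rs i\<^esub> = x"
  by (simp_all add: ring_Rs ring.ring_simprules(2,6) monoid.l_one monoid.r_one ring.is_monoid)

lemma ring_prod_ring: "ring R"
proof (rule ringI)
  show "abelian_group R"
  proof (rule abelian_groupI)
    fix x assume x: "x \<in> carrier R"
    show "\<exists>y \<in> carrier R. y \<oplus>\<^bsub>R\<^esub> x = \<zero>\<^bsub>R\<^esub>"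
      using x by (intro bexI[of _ "\<lambda>i\<in>{..<m}. \<ominus>\<^bsub>Rs i\<^esub> x i"])
        (auto simp: prod_ring_simps PiE_iff intro!: ext ring.ring_simprules ring_Rs)
  qed (auto simp: prod_ring_simps PiE_iff extensional_def intro!: ext ring.ring_simprules ring_Rs)
  show "monoid R"
    by (rule monoidI)
      (auto simp: prod_ring_simps PiE_iff extensional_def intro!: ext ring.ring_simprules ring_Rs)
qed (auto simp: prod_ring_simps PiE_iff intro!: ext ring.ring_simprules ring_Rs)

lemma prod_ring_zero_closed: "\<zero>\<^bsub>R\<^esub> \<in> carrier R"
  and prod_ring_one_closed: "\<one>\<^bsub>R\<^esub> \<in> carrier R"
  by (simp_all add: ring.ring_simprules(2,6)[OF ring_prod_ring])

lemma prod_ring_minus: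
  assumes x: "x \<in> carrier R" and y: "y \<in> carrier R"
  shows "x \<ominus>\<^bsub>R\<^esub> y = (\<lambda>i\<in>{..<m}. x i \<ominus>\<^bsub>Rs i\<^esub> y i)"
proof -
  have "\<ominus>\<^bsub>R\<^esub> y = (\<lambda>i\<in>{..<m}. \<ominus>\<^bsub>Rs i\<^esub> y i)"
    using y by (intro abelian_group.minus_equality[OF ring.is_abelian_group[OF ring_prod_ring]])
      (auto simp: prod_ring_simps PiE_iff intro!: ext ring.ring_simprules ring_Rs)
  then show ?thesis
    using x y by (auto simp: a_minus_def prod_ring_simps PiE_iff intro!: ext ring.ring_simprules ring_Rs)
qed

lemma prod_ring_Units_component:
  assumes k: "k \<in> Units R" and i: "i < m"
  shows "k i \<in> Units (Rs i)"
proof -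
  obtain x where x: "x \<in> carrier R" and k: "k \<in> carrier R"
    and inv1: "x \<otimes>\<^bsub>R\<^esub> k = \<one>\<^bsub>R\<^esub>" and inv2: "k \<otimes>\<^bsub>R\<^esub> x = \<one>\<^bsub>R\<^esub>"
    using k by (auto simp: Units_def)
  have "x i \<otimes>\<^bsub>Rs i\<^esub> k i = \<one>\<^bsub>Rs i\<^esub>" "k i \<otimes>\<^bsub>Rs i\<^esub> x i = \<one>\<^bsub>Rs i\<^esub>"
    using fun_cong[OF inv1, of i] fun_cong[OF inv2, of i] i by (simp_all add: prod_ring_simps)
  then show ?thesis using x k i by (auto simp: Units_def prod_ring_carrier PiE_iff)
qed

lemma prod_single_carrier: "i < m \<Longrightarrow> a \<in> carrier (Rs i) \<Longrightarrow> prod_single m Rs i a \<in> carrier R"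
  by (auto simp: prod_single_def prod_ring_carrier intro: ring.ring_simprules ring_Rs)

lemma prod_embed_carrier: "i < m \<Longrightarrow> a \<in> carrier (Rs i) \<Longrightarrow> prod_embed m Rs i a \<in> carrier R"
  by (auto simp: prod_embed_def prod_ring_carrier intro: ring.ring_simprules ring_Rs)

lemma prod_embed_one: "prod_embed m Rs i \<one>\<^bsub>Rs i\<^esub> = \<one>\<^bsub>R\<^esub>"
  by (auto simp: prod_embed_def prod_ring_one)

lemma prod_embed_mult:
  "i < m \<Longrightarrow> a \<in> carrier (Rs i) \<Longrightarrow> b \<in> carrier (Rs i) \<Longrightarrow>
     prod_embed m Rs i (a \<otimes>\<^bsub>Rs i\<^esub> b) = prod_embed m Rs i a \<otimes>\<^bsub>R\<^esub> prod_embed m Rs i b"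
  by (auto simp: prod_embed_def prod_ring_mult intro!: ext ring.ring_simprules ring_Rs)


lemma prod_single_component [simp]: "i < m \<Longrightarrow> prod_single m Rs i a i = a"
  by (simp add: prod_single_def)

lemma subgroup_comp_subgroup:
  assumes K: "subgroup K (units_of R)" and i: "i < m"
  shows "subgroup (comp_subgroup m Rs K i) (units_of (Rs i))"
proof -
  interpret Ri: ring "Rs i" using ring_Rs i .
  note K_closed = units_of_subgroupD[OF ring.is_monoid[OF ring_prod_ring] K]
  show ?thesis
  proof (rule group.subgroupI[OF Ri.units_group])
    show "comp_subgroup m Rs K i \<subseteq> carrier (units_of (Rs i))"
      by (auto simp: comp_subgroup_def units_of_carrier)
    show "comp_subgroup m Rs K i \<noteq> {}"
      using K_closed(2) prod_embed_one by (auto simp: comp_subgroup_def)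
  next
    fix a assume a: "a \<in> comp_subgroup m Rs K i"
    then have aU: "a \<in> Units (Rs i)" and aK: "prod_embed m Rs i a \<in> K"
      by (auto simp: comp_subgroup_def)
    have a_carrier: "a \<in> carrier (Rs i)" "inv\<^bsub>Rs i\<^esub> a \<in> carrier (Rs i)"
      using aU by auto
    have "prod_embed m Rs i (inv\<^bsub>Rs i\<^esub> a) = inv\<^bsub>R\<^esub> (prod_embed m Rs i a)"
    proof (rule monoid.inv_unique'[OF ring.is_monoid[OF ring_prod_ring]])
      show "prod_embed m Rs i a \<in> carrier R" "prod_embed m Rs i (inv\<^bsub>Rs i\<^esub> a) \<in> carrier R"
        using aU i prod_embed_carrier by auto
      show "prod_embed m Rs i a \<otimes>\<^bsub>R\<^esub> prod_embed m Rs i (inv\<^bsub>Rs i\<^esub> a) = \<one>\<^bsub>R\<^esub>"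
        "prod_embed m Rs i (inv\<^bsub>Rs i\<^esub> a) \<otimes>\<^bsub>R\<^esub> prod_embed m Rs i a = \<one>\<^bsub>R\<^esub>"
        using aU a_carrier i by (simp_all add: prod_embed_one flip: prod_embed_mult)
    qed
    then show "inv\<^bsub>units_of (Rs i)\<^esub> a \<in> comp_subgroup m Rs K i"
      using aU K_closed(4)[OF aK] by (simp add: Ri.units_of_inv comp_subgroup_def)
  next
    fix a b assume a: "a \<in> comp_subgroup m Rs K i" and b: "b \<in> comp_subgroup m Rs K i"
    then have "a \<in> carrier (Rs i)" "b \<in> carrier (Rs i)"
      by (auto simp: comp_subgroup_def Units_def)
    then show "a \<otimes>\<^bsub>units_of (Rs i)\<^esub> b \<in> comp_subgroup m Rs K i"
      using a b i K_closed(3) by (auto simp: comp_subgroup_def units_of_mult prod_embed_mult)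
  qed
qed

lemma restrict_mem_of_comp_subgroup:
  assumes K: "subgroup K (units_of R)" and \<kappa>: "\<And>i. i < m \<Longrightarrow> \<kappa> i \<in> comp_subgroup m Rs K i"
  shows "(\<lambda>i\<in>{..<m}. \<kappa> i) \<in> K"
proof -
  note K_closed = units_of_subgroupD[OF ring.is_monoid[OF ring_prod_ring] K]
  have \<kappa>_carrier: "\<And>i. i < m \<Longrightarrow> \<kappa> i \<in> carrier (Rs i)"
    using \<kappa> by (auto simp: comp_subgroup_def Units_def)
  have "(\<lambda>j\<in>{..<m}. if j < n then \<kappa> j else \<one>\<^bsub>Rs j\<^esub>) \<in> K" if "n \<le> m" for n
    using that
  proof (induction n)
    case 0
    have "(\<lambda>j\<in>{..<m}. if j < 0 then \<kappa> j else \<one>\<^bsub>Rs j\<^esub>) = \<one>\<^bsub>R\<^esub>"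
      by (simp add: prod_ring_one)
    then show ?case using K_closed(2) by simp
  next
    case (Suc n)
    have step: "(\<lambda>j\<in>{..<m}. if j < Suc n then \<kappa> j else \<one>\<^bsub>Rs j\<^esub>) =
      (\<lambda>j\<in>{..<m}. if j < n then \<kappa> j else \<one>\<^bsub>Rs j\<^esub>) \<otimes>\<^bsub>R\<^esub> prod_embed m Rs n (\<kappa> n)"
      using Suc.prems \<kappa>_carrier by (auto simp: prod_ring_mult prod_embed_def)
    have "prod_embed m Rs n (\<kappa> n) \<in> K"
      using \<kappa>[of n] Suc.prems by (simp add: comp_subgroup_def)
    then show ?case
      unfolding step using K_closed(3) Suc.IH[OF Suc_leD[OF Suc.prems]] by blast
  qed
  moreover have "(\<lambda>j\<in>{..<m}. if j < m then \<kappa> j else \<one>\<^bsub>Rs j\<^esub>) = (\<lambda>j\<in>{..<m}. \<kappa> j)"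
    by (rule restrict_ext) simp
  ultimately show ?thesis by (metis order_refl)
qed

lemma prod_map_ring_hom_iff:
  "prod_map m Rs fs \<in> ring_hom R R \<longleftrightarrow> (\<forall>i<m. fs i \<in> ring_hom (Rs i) (Rs i))"
proof
  let ?F = "prod_map m Rs fs"
  assume F: "?F \<in> ring_hom R R"
  show "\<forall>i<m. fs i \<in> ring_hom (Rs i) (Rs i)"
  proof (intro allI impI ring_hom_memI)
    fix i assume i: "i < m"
    note F_component = prod_map_apply_component[OF _ i, where Rs = Rs and fs = fs]
    fix a b assume a: "a \<in> carrier (Rs i)" and b: "b \<in> carrier (Rs i)"
    note single = prod_single_carrier[OF i a] prod_single_carrier[OF i b]
    show "fs i a \<in> carrier (Rs i)"
      using F_component[OF single(1)] prod_ring_carrier_component[OF ring_hom_closed[OF F single(1)] i] i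
      by simp
    have "fs i (a \<otimes>\<^bsub>Rs i\<^esub> b) = ?F (prod_single m Rs i a \<otimes>\<^bsub>R\<^esub> prod_single m Rs i b) i"
      using F_component[OF ring.ring_simprules(5)[OF ring_prod_ring single]] i
      by (simp add: prod_ring_mult)
    then show "fs i (a \<otimes>\<^bsub>Rs i\<^esub> b) = fs i a \<otimes>\<^bsub>Rs i\<^esub> fs i b"
      using ring_hom_mult[OF F single] F_component single i by (simp add: prod_ring_mult)
    have "fs i (a \<oplus>\<^bsub>Rs i\<^esub> b) = ?F (prod_single m Rs i a \<oplus>\<^bsub>R\<^esub> prod_single m Rs i b) i"
      using F_component[OF ring.ring_simprules(1)[OF ring_prod_ring single]] i
      by (simp add: prod_ring_add)
    then show "fs i (a \<oplus>\<^bsub>Rs i\<^esub> b) = fs i a \<oplus>\<^bsub>Rs i\<^esub> fs i b"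
      using ring_hom_add[OF F single] F_component single i by (simp add: prod_ring_add)
  next
    fix i assume i: "i < m"
    show "fs i \<one>\<^bsub>Rs i\<^esub> = \<one>\<^bsub>Rs i\<^esub>"
      using fun_cong[OF ring_hom_one[OF F], of i] i
        prod_map_apply_component[OF ring.ring_simprules(6)[OF ring_prod_ring] i, where fs = fs]
      by (simp add: prod_ring_one)
  qed
next
  let ?F = "prod_map m Rs fs"
  assume fs: "\<forall>i<m. fs i \<in> ring_hom (Rs i) (Rs i)"
  show "?F \<in> ring_hom R R"
  proof (rule ring_hom_memI)
    fix x y assume x: "x \<in> carrier R" and y: "y \<in> carrier R"
    note x_i = prod_ring_carrier_component[OF x] and y_i = prod_ring_carrier_component[OF y]
    show "?F x \<in> carrier R"
      using fs x_i by (auto simp: prod_map_apply[OF x] prod_ring_carrier ring_hom_closed)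
    have "x \<otimes>\<^bsub>R\<^esub> y \<in> carrier R" "x \<oplus>\<^bsub>R\<^esub> y \<in> carrier R"
      using x y ring.ring_simprules(1,5)[OF ring_prod_ring] by auto
    then show "?F (x \<otimes>\<^bsub>R\<^esub> y) = ?F x \<otimes>\<^bsub>R\<^esub> ?F y" and "?F (x \<oplus>\<^bsub>R\<^esub> y) = ?F x \<oplus>\<^bsub>R\<^esub> ?F y"
      using fs x_i y_i
      by (auto simp: prod_map_apply x y prod_ring_mult prod_ring_add ring_hom_mult ring_hom_add
          intro!: restrict_ext)
  next
    show "?F \<one>\<^bsub>R\<^esub> = \<one>\<^bsub>R\<^esub>"
      using fs ring.ring_simprules(6)[OF ring_prod_ring]
      by (auto simp: prod_map_apply prod_ring_one ring_hom_one intro!: restrict_ext)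
  qed
qed

lemma cyc_rel_preserving_componentwise:
  assumes f: "cyc_rel_preserving K R f" "f \<in> carrier R \<rightarrow> carrier R"
    and x: "x \<in> carrier R" and y: "y \<in> carrier R"
  obtains k where "k \<in> K"
    and "\<And>i. i < m \<Longrightarrow> f y i \<ominus>\<^bsub>Rs i\<^esub> f x i = (y i \<ominus>\<^bsub>Rs i\<^esub> x i) \<otimes>\<^bsub>Rs i\<^esub> k i"
proof -
  obtain k where k: "k \<in> K" and e: "f y \<ominus>\<^bsub>R\<^esub> f x = (y \<ominus>\<^bsub>R\<^esub> x) \<otimes>\<^bsub>R\<^esub> k"
    using f(1) x y by (auto simp: cyc_rel_preserving_def)
  have "f x \<in> carrier R" "f y \<in> carrier R" using f(2) x y by auto
  then have "f y i \<ominus>\<^bsub>Rs i\<^esub> f x i = (y i \<ominus>\<^bsub>Rs i\<^esub> x i) \<otimes>\<^bsub>Rs i\<^esub> k i" if "i < m" for i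
    using fun_cong[OF e, of i] that x y by (simp add: prod_ring_minus prod_ring_mult)
  then show ?thesis using that k by blast
qed

end

lemma cring_prod_ring:
  assumes cring: "\<And>i. i < m \<Longrightarrow> cring (Rs i)"
  shows "cring (prod_ring m Rs)"
proof -
  interpret ring_family m Rs
    using cring cring.axioms(1) ring_family.intro by blast
  have comm: "x \<otimes>\<^bsub>prod_ring m Rs\<^esub> y = y \<otimes>\<^bsub>prod_ring m Rs\<^esub> x"
    if x: "x \<in> carrier (prod_ring m Rs)" and y: "y \<in> carrier (prod_ring m Rs)" for x y
    unfolding prod_ring_mult
  proof (rule restrict_ext)
    fix i assume "i \<in> {..<m}"
    then have i: "i < m" by simp
    interpret Ri: cring "Rs i" using cring[OF i] .
    show "x i \<otimes>\<^bsub>Rs i\<^esub> y i = y i \<otimes>\<^bsub>Rs i\<^esub> x i"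
      using prod_ring_carrier_component[OF x i] prod_ring_carrier_component[OF y i] by (rule Ri.m_comm)
  qed
  show ?thesis
    by (intro cring.intro ring_prod_ring monoid.monoid_comm_monoidI[OF ring.is_monoid[OF ring_prod_ring]] comm)
qed

section \<open>Cyclotomic schemes over a finite direct product\<close>

locale cyc_product = ring_family +
  fixes K :: "(nat \<Rightarrow> 'a) set"
  assumes finite_Rs: "i < m \<Longrightarrow> finite (carrier (Rs i))"
    and subgroup_K: "subgroup K (units_of (prod_ring m Rs))"
begin

abbreviation Ks :: "nat \<Rightarrow> 'a set" where "Ks i \<equiv> comp_subgroup m Rs K i"

lemma K_subset_carrier: "K \<subseteq> carrier R"
  using units_of_subgroupD(1)[OF ring.is_monoid[OF ring_prod_ring] subgroup_K] by (auto simp: Units_def)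

lemma cyc_aut_R_iff:
  "f \<in> cyc_aut K R \<longleftrightarrow> f \<in> carrier R \<rightarrow>\<^sub>E carrier R \<and> inj_on f (carrier R) \<and> cyc_rel_preserving K R f"
  using ring.cyc_aut_iff_rel_preserving[OF ring_prod_ring finite_carrier_prod_ring[OF finite_Rs] subgroup_K] .

lemma cyc_aut_Rs_iff:
  "i < m \<Longrightarrow> g \<in> cyc_aut (Ks i) (Rs i) \<longleftrightarrow>
     g \<in> carrier (Rs i) \<rightarrow>\<^sub>E carrier (Rs i) \<and> inj_on g (carrier (Rs i)) \<and> cyc_rel_preserving (Ks i) (Rs i) g"
  using ring.cyc_aut_iff_rel_preserving[OF ring_Rs finite_Rs subgroup_comp_subgroup[OF subgroup_K]] .

lemma cyc_aut_component_eq: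
  assumes f: "f \<in> cyc_aut K R" and x: "x \<in> carrier R" and y: "y \<in> carrier R"
    and i: "i < m" and xy: "x i = y i"
  shows "f x i = f y i"
proof -
  interpret Ri: ring "Rs i" using ring_Rs i .
  have f_pres: "cyc_rel_preserving K R f" and fc: "f \<in> carrier R \<rightarrow> carrier R"
    using f cyc_aut_R_iff by auto
  obtain k where k: "k \<in> K"
    and e: "\<And>j. j < m \<Longrightarrow> f y j \<ominus>\<^bsub>Rs j\<^esub> f x j = (y j \<ominus>\<^bsub>Rs j\<^esub> x j) \<otimes>\<^bsub>Rs j\<^esub> k j"
    using cyc_rel_preserving_componentwise[OF f_pres fc x y] by blast
  have "k i \<in> carrier (Rs i)"
    using k K_subset_carrier prod_ring_carrier_component i by blast
  moreover have "y i \<in> carrier (Rs i)" "f x i \<in> carrier (Rs i)" "f y i \<in> carrier (Rs i)"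
    using x y fc i prod_ring_carrier_component by blast+
  ultimately have "f y i \<ominus>\<^bsub>Rs i\<^esub> f x i = \<zero>\<^bsub>Rs i\<^esub>"
    using e[OF i] xy by (simp add: Ri.r_neg Ri.minus_eq)
  then show ?thesis using \<open>f x i \<in> carrier (Rs i)\<close> \<open>f y i \<in> carrier (Rs i)\<close> by simp
qed

lemma cyc_aut_apply_component:
  assumes f: "f \<in> cyc_aut K R" and x: "x \<in> carrier R" and i: "i < m"
  shows "f x i = prod_component m Rs f i (x i)"
proof -
  have "x i \<in> carrier (Rs i)" using prod_ring_carrier_component[OF x i] .
  then show ?thesis
    using cyc_aut_component_eq[OF f x prod_single_carrier[OF i] i] i
    by (simp add: prod_component_def)
qed

lemma cyc_aut_eq_prod_map:
  assumes f: "f \<in> cyc_aut K R"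
  shows "f = prod_map m Rs (prod_component m Rs f)"
proof
  fix x
  have fE: "f \<in> carrier R \<rightarrow>\<^sub>E carrier R" using f cyc_aut_R_iff by auto
  show "f x = prod_map m Rs (prod_component m Rs f) x"
  proof (cases "x \<in> carrier R")
    case True
    have "f x \<in> carrier R" using fE True by auto
    then have "f x = (\<lambda>i\<in>{..<m}. f x i)" by (simp add: prod_ring_carrier PiE_restrict)
    also have "\<dots> = (\<lambda>i\<in>{..<m}. prod_component m Rs f i (x i))"
      using cyc_aut_apply_component[OF f True] by (intro restrict_ext) simp
    finally show ?thesis by (simp add: prod_map_apply[OF True])
  next
    case False
    then show ?thesis using PiE_arb[OF fE False] by (simp add: prod_map_def)
  qed
qed


lemma prod_component_rel_preserving:
  assumes f: "f \<in> cyc_aut_stab K R \<zero>\<^bsub>R\<^esub> \<one>\<^bsub>R\<^esub>" and i: "i < m"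
  shows "cyc_rel_preserving (Ks i) (Rs i) (prod_component m Rs f i)"
  unfolding cyc_rel_preserving_def
proof (intro ballI)
  fix a b assume a: "a \<in> carrier (Rs i)" and b: "b \<in> carrier (Rs i)"
  have fa: "f \<in> cyc_aut K R" and f0: "f \<zero>\<^bsub>R\<^esub> = \<zero>\<^bsub>R\<^esub>" and f1: "f \<one>\<^bsub>R\<^esub> = \<one>\<^bsub>R\<^esub>"
    using f by (auto simp: cyc_aut_stab_def)
  have f_pres: "cyc_rel_preserving K R f" and fc: "f \<in> carrier R \<rightarrow> carrier R"
    using fa cyc_aut_R_iff by auto
  let ?x = "prod_single m Rs i a" and ?y = "prod_embed m Rs i b"
  have x: "?x \<in> carrier R" and y: "?y \<in> carrier R"
    using prod_single_carrier[OF i a] prod_embed_carrier[OF i b] .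
  \<comment> \<open>Off coordinate i, the points ?x and ?y look like 0 and 1, which f fixes;
    this forces the multiplier k to be 1 there.\<close>
  obtain k where k: "k \<in> K"
    and e: "\<And>j. j < m \<Longrightarrow> f ?y j \<ominus>\<^bsub>Rs j\<^esub> f ?x j = (?y j \<ominus>\<^bsub>Rs j\<^esub> ?x j) \<otimes>\<^bsub>Rs j\<^esub> k j"
    using cyc_rel_preserving_componentwise[OF f_pres fc x y] by blast
  have k_carrier: "k \<in> carrier R" using k K_subset_carrier by blast
  have k_off: "k j = \<one>\<^bsub>Rs j\<^esub>" if j: "j < m" "j \<noteq> i" for j
  proof -
    interpret Rj: ring "Rs j" using ring_Rs j(1) .
    have "f ?x j = f \<zero>\<^bsub>R\<^esub> j"
      using j by (intro cyc_aut_component_eq[OF fa x prod_ring_zero_closed])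
        (simp_all add: prod_single_def prod_ring_zero)
    then have "f ?x j = \<zero>\<^bsub>Rs j\<^esub>" using f0 j by (simp add: prod_ring_zero)
    moreover have "f ?y j = f \<one>\<^bsub>R\<^esub> j"
      using j by (intro cyc_aut_component_eq[OF fa y prod_ring_one_closed])
        (simp_all add: prod_embed_def prod_ring_one)
    then have "f ?y j = \<one>\<^bsub>Rs j\<^esub>" using f1 j by (simp add: prod_ring_one)
    moreover have "?x j = \<zero>\<^bsub>Rs j\<^esub>" "?y j = \<one>\<^bsub>Rs j\<^esub>"
      using j by (simp_all add: prod_single_def prod_embed_def)
    moreover have "k j \<in> carrier (Rs j)" using prod_ring_carrier_component[OF k_carrier j(1)] .
    ultimately show ?thesis using e[OF j(1)] by (simp add: Rj.minus_eq)
  qed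
  have "k = prod_embed m Rs i (k i)"
  proof
    fix j
    show "k j = prod_embed m Rs i (k i) j"
      using k_off k_carrier PiE_arb[of k "{..<m}"] by (cases "j < m") (auto simp: prod_embed_def prod_ring_carrier)
  qed
  moreover have "k i \<in> Units (Rs i)"
    using prod_ring_Units_component[OF _ i] k units_of_subgroupD(1)[OF ring.is_monoid[OF ring_prod_ring] subgroup_K]
    by blast
  ultimately have "k i \<in> Ks i" using k by (simp add: comp_subgroup_def)
  moreover have "prod_component m Rs f i b \<ominus>\<^bsub>Rs i\<^esub> prod_component m Rs f i a = (b \<ominus>\<^bsub>Rs i\<^esub> a) \<otimes>\<^bsub>Rs i\<^esub> k i"
    using e[OF i] cyc_aut_apply_component[OF fa x i] cyc_aut_apply_component[OF fa y i] i
    by (simp add: prod_embed_def)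
  ultimately show "\<exists>k \<in> Ks i. prod_component m Rs f i b \<ominus>\<^bsub>Rs i\<^esub> prod_component m Rs f i a =
      (b \<ominus>\<^bsub>Rs i\<^esub> a) \<otimes>\<^bsub>Rs i\<^esub> k"
    by blast
qed


lemma prod_component_cyc_aut_stab:
  assumes f: "f \<in> cyc_aut_stab K R \<zero>\<^bsub>R\<^esub> \<one>\<^bsub>R\<^esub>" and i: "i < m"
  shows "prod_component m Rs f i \<in> cyc_aut_stab (Ks i) (Rs i) \<zero>\<^bsub>Rs i\<^esub> \<one>\<^bsub>Rs i\<^esub>"
proof -
  have fa: "f \<in> cyc_aut K R" and f0: "f \<zero>\<^bsub>R\<^esub> = \<zero>\<^bsub>R\<^esub>" and f1: "f \<one>\<^bsub>R\<^esub> = \<one>\<^bsub>R\<^esub>"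
    using f by (auto simp: cyc_aut_stab_def)
  have fc: "f \<in> carrier R \<rightarrow> carrier R" and f_inj: "inj_on f (carrier R)"
    using fa cyc_aut_R_iff by auto
  let ?g = "prod_component m Rs f"
  have "?g i a \<in> carrier (Rs i)" if a: "a \<in> carrier (Rs i)" for a
    using a i prod_ring_carrier_component[OF funcset_mem[OF fc prod_single_carrier[OF i a]] i]
    by (simp add: prod_component_def)
  then have gE: "?g i \<in> carrier (Rs i) \<rightarrow>\<^sub>E carrier (Rs i)"
    by (auto simp: prod_component_def)
  have g_inj: "inj_on (?g i) (carrier (Rs i))"
  proof (rule inj_onI)
    fix a b assume a: "a \<in> carrier (Rs i)" and b: "b \<in> carrier (Rs i)" and ab: "?g i a = ?g i b"
    note single = prod_single_carrier[OF i a] prod_single_carrier[OF i b]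
    have f_eq: "f z = (\<lambda>j\<in>{..<m}. ?g j (z j))" if "z \<in> carrier R" for z
      using fun_cong[OF cyc_aut_eq_prod_map[OF fa], of z] prod_map_apply[OF that] by simp
    have "f (prod_single m Rs i a) = f (prod_single m Rs i b)"
      unfolding f_eq[OF single(1)] f_eq[OF single(2)]
      using ab by (intro restrict_ext) (simp add: prod_single_def)
    then have "prod_single m Rs i a i = prod_single m Rs i b i"
      using f_inj single by (auto dest: inj_onD)
    then show "a = b" using i by simp
  qed
  have "?g i \<zero>\<^bsub>Rs i\<^esub> = \<zero>\<^bsub>Rs i\<^esub>"
    using cyc_aut_apply_component[OF fa prod_ring_zero_closed i] f0 i by (simp add: prod_ring_zero)
  moreover have "?g i \<one>\<^bsub>Rs i\<^esub> = \<one>\<^bsub>Rs i\<^esub>"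
    using cyc_aut_apply_component[OF fa prod_ring_one_closed i] f1 i by (simp add: prod_ring_one)
  ultimately show ?thesis
    using cyc_aut_Rs_iff[OF i] gE g_inj prod_component_rel_preserving[OF f i]
    by (simp add: cyc_aut_stab_def)
qed


lemma prod_map_rel_preserving:
  assumes fs: "\<And>i. i < m \<Longrightarrow> fs i \<in> carrier (Rs i) \<rightarrow> carrier (Rs i)"
    and fs_pres: "\<And>i. i < m \<Longrightarrow> cyc_rel_preserving (Ks i) (Rs i) (fs i)"
  shows "cyc_rel_preserving K R (prod_map m Rs fs)"
  unfolding cyc_rel_preserving_def
proof (intro ballI)
  let ?F = "prod_map m Rs fs"
  fix x y assume x: "x \<in> carrier R" and y: "y \<in> carrier R"
  note x_i = prod_ring_carrier_component[OF x] and y_i = prod_ring_carrier_component[OF y]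
  have "\<forall>i\<in>{..<m}. \<exists>\<kappa> \<in> Ks i. fs i (y i) \<ominus>\<^bsub>Rs i\<^esub> fs i (x i) = (y i \<ominus>\<^bsub>Rs i\<^esub> x i) \<otimes>\<^bsub>Rs i\<^esub> \<kappa>"
    using fs_pres x_i y_i by (auto simp: cyc_rel_preserving_def)
  then obtain \<kappa> where \<kappa>: "\<And>i. i < m \<Longrightarrow> \<kappa> i \<in> Ks i"
    and \<kappa>_eq: "\<And>i. i < m \<Longrightarrow> fs i (y i) \<ominus>\<^bsub>Rs i\<^esub> fs i (x i) = (y i \<ominus>\<^bsub>Rs i\<^esub> x i) \<otimes>\<^bsub>Rs i\<^esub> \<kappa> i"
    by (metis lessThan_iff)
  have F_carrier: "?F z \<in> carrier R" if "z \<in> carrier R" for z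
    using fs prod_ring_carrier_component[OF that]
    by (auto simp: prod_map_apply[OF that] prod_ring_carrier)
  have "?F y \<ominus>\<^bsub>R\<^esub> ?F x = (\<lambda>i\<in>{..<m}. fs i (y i) \<ominus>\<^bsub>Rs i\<^esub> fs i (x i))"
    by (simp add: prod_ring_minus F_carrier x y prod_map_apply_component cong: restrict_cong)
  also have "\<dots> = (y \<ominus>\<^bsub>R\<^esub> x) \<otimes>\<^bsub>R\<^esub> (\<lambda>i\<in>{..<m}. \<kappa> i)"
    using \<kappa>_eq by (auto simp: prod_ring_minus x y prod_ring_mult intro!: restrict_ext)
  finally show "\<exists>k \<in> K. ?F y \<ominus>\<^bsub>R\<^esub> ?F x = (y \<ominus>\<^bsub>R\<^esub> x) \<otimes>\<^bsub>R\<^esub> k"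
    using restrict_mem_of_comp_subgroup[OF subgroup_K \<kappa>] by blast
qed

lemma prod_map_cyc_aut_stab:
  assumes fs: "\<And>i. i < m \<Longrightarrow> fs i \<in> cyc_aut_stab (Ks i) (Rs i) \<zero>\<^bsub>Rs i\<^esub> \<one>\<^bsub>Rs i\<^esub>"
  shows "prod_map m Rs fs \<in> cyc_aut_stab K R \<zero>\<^bsub>R\<^esub> \<one>\<^bsub>R\<^esub>"
proof -
  let ?F = "prod_map m Rs fs"
  have fs_aut: "fs i \<in> carrier (Rs i) \<rightarrow>\<^sub>E carrier (Rs i)" "inj_on (fs i) (carrier (Rs i))"
    "cyc_rel_preserving (Ks i) (Rs i) (fs i)" if "i < m" for i
    using fs[OF that] cyc_aut_Rs_iff[OF that] by (auto simp: cyc_aut_stab_def)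
  have FE: "?F \<in> carrier R \<rightarrow>\<^sub>E carrier R"
    using fs_aut(1) by (auto simp: prod_map_def prod_ring_carrier PiE_iff)
  have F_inj: "inj_on ?F (carrier R)"
  proof (rule inj_onI)
    fix x y assume x: "x \<in> carrier R" and y: "y \<in> carrier R" and xy: "?F x = ?F y"
    show "x = y"
    proof (rule PiE_ext[OF x[unfolded prod_ring_carrier] y[unfolded prod_ring_carrier]])
      fix i assume "i \<in> {..<m}"
      then have i: "i < m" by simp
      have "fs i (x i) = fs i (y i)"
        using fun_cong[OF xy, of i] i x y by (simp add: prod_map_apply_component)
      then show "x i = y i"
        using inj_onD[OF fs_aut(2)[OF i]] prod_ring_carrier_component[OF x i] prod_ring_carrier_component[OF y i]
        by blast
    qed
  qed
  have "?F \<zero>\<^bsub>R\<^esub> = \<zero>\<^bsub>R\<^esub>" "?F \<one>\<^bsub>R\<^esub> = \<one>\<^bsub>R\<^esub>"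
    unfolding prod_map_apply[OF prod_ring_zero_closed] prod_map_apply[OF prod_ring_one_closed]
    using fs by (auto simp: prod_ring_zero prod_ring_one cyc_aut_stab_def intro!: restrict_ext)
  then show ?thesis
    using cyc_aut_R_iff FE F_inj prod_map_rel_preserving fs_aut
    by (simp add: cyc_aut_stab_def PiE_iff)
qed


lemma cyc_aut_stab_prod_ring:
  "cyc_aut_stab K R \<zero>\<^bsub>R\<^esub> \<one>\<^bsub>R\<^esub> =
     {prod_map m Rs fs | fs. \<forall>i < m. fs i \<in> cyc_aut_stab (Ks i) (Rs i) \<zero>\<^bsub>Rs i\<^esub> \<one>\<^bsub>Rs i\<^esub>}"
proof (intro equalityI subsetI)
  fix f assume f: "f \<in> cyc_aut_stab K R \<zero>\<^bsub>R\<^esub> \<one>\<^bsub>R\<^esub>"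
  then have "f = prod_map m Rs (prod_component m Rs f)"
    using cyc_aut_eq_prod_map by (simp add: cyc_aut_stab_def)
  then show "f \<in> {prod_map m Rs fs | fs. \<forall>i < m. fs i \<in> cyc_aut_stab (Ks i) (Rs i) \<zero>\<^bsub>Rs i\<^esub> \<one>\<^bsub>Rs i\<^esub>}"
    using prod_component_cyc_aut_stab[OF f] by blast
qed (auto intro: prod_map_cyc_aut_stab)

lemma cyc_normal_prod_ring_iff:
  assumes cring: "\<And>i. i < m \<Longrightarrow> cring (Rs i)"
  shows "cyc_normal K R \<longleftrightarrow> (\<forall>i < m. cyc_normal (Ks i) (Rs i))"
proof -
  let ?stab = "\<lambda>i. cyc_aut_stab (Ks i) (Rs i) \<zero>\<^bsub>Rs i\<^esub> \<one>\<^bsub>Rs i\<^esub>"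
  have "cyc_normal K R \<longleftrightarrow> (\<forall>f \<in> cyc_aut_stab K R \<zero>\<^bsub>R\<^esub> \<one>\<^bsub>R\<^esub>. f \<in> ring_hom R R)"
    using cring.cyc_normal_iff_stab_ring_hom[OF cring_prod_ring[OF cring]
        finite_carrier_prod_ring[OF finite_Rs] subgroup_K] .
  also have "\<dots> \<longleftrightarrow> (\<forall>fs. (\<forall>i<m. fs i \<in> ?stab i) \<longrightarrow> prod_map m Rs fs \<in> ring_hom R R)"
    unfolding cyc_aut_stab_prod_ring by blast
  also have "\<dots> \<longleftrightarrow> (\<forall>fs. (\<forall>i<m. fs i \<in> ?stab i) \<longrightarrow> (\<forall>i<m. fs i \<in> ring_hom (Rs i) (Rs i)))"
    by (simp only: prod_map_ring_hom_iff)
  also have "\<dots> \<longleftrightarrow> (\<forall>i<m. \<forall>g \<in> ?stab i. g \<in> ring_hom (Rs i) (Rs i))"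
  proof (intro iffI allI impI ballI)
    fix i g assume H: "\<forall>fs. (\<forall>i<m. fs i \<in> ?stab i) \<longrightarrow> (\<forall>i<m. fs i \<in> ring_hom (Rs i) (Rs i))"
      and i: "i < m" and g: "g \<in> ?stab i"
    let ?fs = "\<lambda>j. if j = i then g else (\<lambda>x \<in> carrier (Rs j). x)"
    have "\<forall>j<m. ?fs j \<in> ?stab j"
      using g ring.restrict_id_cyc_aut_stab[OF ring_Rs] by simp
    then show "g \<in> ring_hom (Rs i) (Rs i)"
      using H[rule_format, of ?fs i] i by simp
  qed blast
  also have "\<dots> \<longleftrightarrow> (\<forall>i < m. cyc_normal (Ks i) (Rs i))"
    using cring.cyc_normal_iff_stab_ring_hom[OF cring finite_Rs subgroup_comp_subgroup[OF subgroup_K]]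
    by blast
  finally show ?thesis .
qed

end

theorem theorem1p3:
  fixes m :: nat and Rs :: "nat \<Rightarrow> ('a, 'b) ring_scheme" and K :: "(nat \<Rightarrow> 'a) set"
  assumes "\<And>i. i < m \<Longrightarrow> cring (Rs i)"
    and "\<And>i. i < m \<Longrightarrow> finite (carrier (Rs i))"
    and "subgroup K (units_of (prod_ring m Rs))"
  shows "cyc_aut_stab K (prod_ring m Rs) \<zero>\<^bsub>prod_ring m Rs\<^esub> \<one>\<^bsub>prod_ring m Rs\<^esub> =
           {prod_map m Rs fs | fs. \<forall>i < m.
              fs i \<in> cyc_aut_stab (comp_subgroup m Rs K i) (Rs i) \<zero>\<^bsub>Rs i\<^esub> \<one>\<^bsub>Rs i\<^esub>}
         \<and> (cyc_normal K (prod_ring m Rs) \<longleftrightarrow>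
              (\<forall>i < m. cyc_normal (comp_subgroup m Rs K i) (Rs i)))"
proof -
  have "\<And>i. i < m \<Longrightarrow> ring (Rs i)" using assms(1) cring.axioms(1) by blast
  then interpret cyc_product m Rs K
    using assms(2,3) by (intro cyc_product.intro ring_family.intro cyc_product_axioms.intro)
  show ?thesis
    using cyc_aut_stab_prod_ring cyc_normal_prod_ring_iff[OF assms(1)] by blast
qed

end
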